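(* Let $r\geq 1$ and let $J_r$ be the $r\times r$ matrix with $1$'s on the diagonal and on the superdiagonal and $0$'s elsewhere. There exists a constant $C=C(r)$ such that if $n\geq 2$ and $x_1,\dots,x_r\in\mathbb R$ satisfy $|x_j|\leq n^{-(j-1)}$ for $1\leq j\leq r$, then $\bigl|\sum_{j=1}^r (J_r^k)_{i,j}x_j\bigr|\leq C$ for $1\leq i\leq r$ and $0\leq k<n$. On the other hand, there exists a constant $C'=C'(r)>0$ such that if $n\geq 2$ and $x_1,\dots,x_r\in\mathbb R$ satisfy $\bigl|\sum_{j=1}^r (J_r^k)_{i,j}x_j\bigr|\leq 1$ for $1\leq i\leq r$ and $0\leq k<n$, then $|x_j|\leq C' n^{-(j-1)}$ for $1\leq j\leq r$. *)

theory Defs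
  imports "Jordan_Normal_Form.Jordan_Normal_Form"
begin

text \<open>J_r is the Jordan block jordan_block r 1 (ones on diagonal and superdiagonal).
  Indices are 0-based: paper index i corresponds to i-1 here.\<close>

end

theory Submission
  imports Defs
begin

text \<open>Row i of J^k x is Y_i(k) = \<Sum>_j (k choose (j - i)) x_j. By Pascal's rule Y_(i+1) is
  the forward difference of Y_i, with Y_r = 0 and Y_i(0) = x_i. The first claim is immediate from
  k choose m \<le> n^m. For the second, fix a step L of about n/r. The sum of Y_i over an
  i-dimensional box of side L is the i-th difference of step L of Y_0, hence at most 2^i in
  absolute value. By descending induction on i, Y_i = O(L^-i) on [0, n): the bound for Y_(i+1)
  makes Y_i oscillate by O(n L^-(i+1)) = O(L^-i) there, so the box sum is L^i Y_i(k) + O(1).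
  At k = 0 this bounds x_i.\<close>

fun box_sum :: "nat \<Rightarrow> nat \<Rightarrow> (nat \<Rightarrow> real) \<Rightarrow> nat \<Rightarrow> real" where
  "box_sum L 0 g a = g a"
| "box_sum L (Suc i) g a = (\<Sum>t<L. box_sum L i g (a + t))"

lemma box_sum_shift: "box_sum L i (\<lambda>b. g (b + c)) a = box_sum L i g (a + c)"
  by (induction i arbitrary: a) (auto simp: add_ac)

lemma box_sum_diff: "box_sum L i (\<lambda>b. f b - g b) a = box_sum L i f a - box_sum L i g a"
  by (induction i arbitrary: a) (auto simp: sum_subtractf)

lemma box_sum_window_sum:
  "box_sum L i (\<lambda>b. \<Sum>t<L. g (b + t)) a = box_sum L (Suc i) g a"
proof (induction i arbitrary: a)
  case (Suc i)
  have "box_sum L (Suc i) (\<lambda>b. \<Sum>t<L. g (b + t)) a = (\<Sum>s<L. \<Sum>t<L. box_sum L i g (a + s + t))"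
    by (simp add: Suc.IH add.assoc)
  then show ?case by simp
qed simp

lemma box_sum_approx:
  assumes "\<And>b. a \<le> b \<Longrightarrow> b \<le> a + i * L \<Longrightarrow> \<bar>g b - c\<bar> \<le> D"
  shows "\<bar>box_sum L i g a - real L ^ i * c\<bar> \<le> real L ^ i * D"
  using assms
proof (induction i arbitrary: a)
  case (Suc i)
  have IH: "\<bar>box_sum L i g (a + t) - real L ^ i * c\<bar> \<le> real L ^ i * D" if "t < L" for t
    using Suc.prems that by (intro Suc.IH) auto
  have "\<bar>box_sum L (Suc i) g a - real L ^ Suc i * c\<bar>
      = \<bar>\<Sum>t<L. box_sum L i g (a + t) - real L ^ i * c\<bar>"
    by (simp add: sum_subtractf)
  also have "\<dots> \<le> (\<Sum>t<L. \<bar>box_sum L i g (a + t) - real L ^ i * c\<bar>)"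
    by (rule sum_abs)
  also have "\<dots> \<le> (\<Sum>t<L. real L ^ i * D)"
    by (rule sum_mono) (simp add: IH)
  finally show ?case by simp
qed simp

locale forward_difference_tower =
  fixes r :: nat and Y :: "nat \<Rightarrow> nat \<Rightarrow> real"
  assumes difference: "i < r \<Longrightarrow> Y i (Suc k) = Y i k + Y (Suc i) k"
    and top_zero: "Y r k = 0"
begin

lemma increment_sum: "i < r \<Longrightarrow> Y i (b + m) - Y i b = (\<Sum>t<m. Y (Suc i) (b + t))"
  by (induction m) (simp_all add: difference)

lemma box_sum_Suc_eq_difference:
  assumes "i < r"
  shows "box_sum L (Suc i) (Y (Suc i)) a = box_sum L i (Y i) (a + L) - box_sum L i (Y i) a"
proof -
  have "box_sum L i (Y i) (a + L) - box_sum L i (Y i) a = box_sum L i (\<lambda>b. Y i (b + L) - Y i b) a"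
    by (simp add: box_sum_diff box_sum_shift)
  also have "\<dots> = box_sum L i (\<lambda>b. \<Sum>t<L. Y (Suc i) (b + t)) a"
    using increment_sum[OF assms] by simp
  finally show ?thesis by (simp add: box_sum_window_sum)
qed

lemma box_sum_bounded:
  assumes bounded: "\<And>k. k < n \<Longrightarrow> \<bar>Y 0 k\<bar> \<le> 1"
  shows "i \<le> r \<Longrightarrow> a + i * L < n \<Longrightarrow> \<bar>box_sum L i (Y i) a\<bar> \<le> 2 ^ i"
proof (induction i arbitrary: a)
  case (Suc i)
  have "\<bar>box_sum L i (Y i) (a + L)\<bar> \<le> 2 ^ i" "\<bar>box_sum L i (Y i) a\<bar> \<le> 2 ^ i"
    using Suc by (auto simp: add_ac)
  moreover have "box_sum L (Suc i) (Y (Suc i)) a = box_sum L i (Y i) (a + L) - box_sum L i (Y i) a"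
    using Suc.prems by (intro box_sum_Suc_eq_difference) auto
  ultimately show ?case by simp
qed (simp add: bounded)

lemma oscillation_bound:
  assumes "i < r" "k < n" "b < n" and M: "\<And>t. t < n \<Longrightarrow> \<bar>Y (Suc i) t\<bar> \<le> M"
  shows "\<bar>Y i k - Y i b\<bar> \<le> 2 * real n * M"
proof -
  have "\<bar>Y i m - Y i 0\<bar> \<le> real n * M" if "m < n" for m
  proof -
    have "\<bar>Y i m - Y i 0\<bar> = \<bar>\<Sum>t<m. Y (Suc i) t\<bar>"
      using increment_sum[OF \<open>i < r\<close>, of 0 m] by simp
    also have "\<dots> \<le> (\<Sum>t<m. \<bar>Y (Suc i) t\<bar>)" by (rule sum_abs)
    also have "\<dots> \<le> real m * M" using sum_mono[of "{..<m}" "\<lambda>t. \<bar>Y (Suc i) t\<bar>" "\<lambda>_. M"] M that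
      by simp
    also have "\<dots> \<le> real n * M" using that M[of 0] by (intro mult_right_mono) auto
    finally show ?thesis .
  qed
  from this[OF \<open>k < n\<close>] this[OF \<open>b < n\<close>] show ?thesis by linarith
qed

lemma row_bound_step:
  assumes bounded: "\<And>k. k < n \<Longrightarrow> \<bar>Y 0 k\<bar> \<le> 1"
    and "i < r" "k < n" "L \<ge> 1" "i * L < n" "real n \<le> c * real L"
    and next_row: "\<And>t. t < n \<Longrightarrow> \<bar>Y (Suc i) t\<bar> \<le> E / real L ^ Suc i"
  shows "\<bar>Y i k\<bar> \<le> (2 ^ i + 2 * c * E) / real L ^ i"
proof -
  have L: "real L > 0" using \<open>L \<ge> 1\<close> by simp
  have "\<bar>Y (Suc i) 0\<bar> \<le> E / real L ^ Suc i" using next_row \<open>k < n\<close> by simp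
  then have "0 \<le> E / real L ^ Suc i" by (rule order_trans[OF abs_ge_zero])
  then have "E \<ge> 0" using L by (simp add: pos_le_divide_eq del: power_Suc)
  have "\<bar>box_sum L i (Y i) 0 - real L ^ i * Y i k\<bar> \<le> real L ^ i * (2 * real n * (E / real L ^ Suc i))"
    using oscillation_bound[OF \<open>i < r\<close> _ \<open>k < n\<close> next_row] \<open>i * L < n\<close>
    by (intro box_sum_approx) auto
  also have "\<dots> = 2 * real n * E / real L" using L by (simp add: field_simps)
  also have "\<dots> \<le> 2 * c * E" using \<open>E \<ge> 0\<close> \<open>real n \<le> c * real L\<close> L
    by (simp add: divide_le_eq) (metis mult.commute mult.left_commute mult_right_mono)
  finally have "\<bar>box_sum L i (Y i) 0 - real L ^ i * Y i k\<bar> \<le> 2 * c * E" .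
  moreover have "\<bar>box_sum L i (Y i) 0\<bar> \<le> 2 ^ i"
    using \<open>i < r\<close> \<open>i * L < n\<close> by (intro box_sum_bounded[OF bounded]) auto
  ultimately have "real L ^ i * \<bar>Y i k\<bar> \<le> 2 ^ i + 2 * c * E"
    by (simp add: abs_mult)
  then show ?thesis using L by (simp add: field_simps)
qed

lemma row_bound:
  assumes bounded: "\<And>k. k < n \<Longrightarrow> \<bar>Y 0 k\<bar> \<le> 1"
    and "L \<ge> 1" "(r - 1) * L < n" "real n \<le> c * real L" "c \<ge> 0"
  shows "i \<le> r \<Longrightarrow> k < n \<Longrightarrow> \<bar>Y i k\<bar> \<le> 2 ^ r * (2 * c + 1) ^ (r - i) / real L ^ i"
proof (induction i arbitrary: k rule: inc_induct)
  case base
  then show ?case by (simp add: top_zero)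
next
  case (step i)
  have "i * L < n"
    using \<open>i < r\<close> \<open>(r - 1) * L < n\<close> mult_le_mono1[of i "r - 1" L] by linarith
  then have "\<bar>Y i k\<bar> \<le> (2 ^ i + 2 * c * (2 ^ r * (2 * c + 1) ^ (r - Suc i))) / real L ^ i"
    using step assms by (intro row_bound_step[OF bounded]) auto
  also have "\<dots> \<le> 2 ^ r * (2 * c + 1) ^ (r - i) / real L ^ i"
  proof (rule divide_right_mono)
    have "(2::real) ^ i \<le> 2 ^ r" using \<open>i < r\<close> by (intro power_increasing) auto
    also have "\<dots> \<le> 2 ^ r * (2 * c + 1) ^ (r - Suc i)" using \<open>c \<ge> 0\<close> by simp
    finally have "(2::real) ^ i \<le> 2 ^ r * (2 * c + 1) ^ (r - Suc i)" .
    moreover have "(2 * c + 1) ^ (r - i) = (2 * c + 1) * (2 * c + 1) ^ (r - Suc i)"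
      using \<open>i < r\<close> by (metis Suc_diff_Suc power_Suc)
    ultimately show "2 ^ i + 2 * c * (2 ^ r * (2 * c + 1) ^ (r - Suc i)) \<le> 2 ^ r * (2 * c + 1) ^ (r - i)"
      by (simp add: algebra_simps)
  qed simp
  finally show ?case .
qed

end

definition jordan_orbit_row :: "nat \<Rightarrow> (nat \<Rightarrow> real) \<Rightarrow> nat \<Rightarrow> nat \<Rightarrow> real" where
  "jordan_orbit_row r x i k = (\<Sum>j<r. (if i \<le> j then real (k choose (j - i)) else 0) * x j)"

lemma jordan_block_pow_mult_row:
  "i < r \<Longrightarrow> (\<Sum>j<r. (jordan_block r (1::real) ^\<^sub>m k) $$ (i, j) * x j) = jordan_orbit_row r x i k"
  unfolding jordan_orbit_row_def by (intro sum.cong) (auto simp: jordan_block_pow)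

lemma jordan_orbit_row_start: "i < r \<Longrightarrow> jordan_orbit_row r x i 0 = x i"
  unfolding jordan_orbit_row_def
  by (subst sum.remove[of _ i]) (auto intro!: sum.neutral split: if_splits)

lemma forward_difference_tower_jordan_orbit_row:
  "forward_difference_tower r (jordan_orbit_row r x)"
proof
  fix i k
  have "real (Suc k choose (j - i)) = real (k choose (j - i)) + real (k choose (j - Suc i))"
    if "i < j" for j
  proof -
    have "j - i = Suc (j - Suc i)" using that by simp
    then show ?thesis by simp
  qed
  then have "(if i \<le> j then real (Suc k choose (j - i)) else 0) =
        (if i \<le> j then real (k choose (j - i)) else 0) + (if Suc i \<le> j then real (k choose (j - Suc i)) else 0)"
    for j by (cases "i < j") auto
  then show "jordan_orbit_row r x i (Suc k) = jordan_orbit_row r x i k + jordan_orbit_row r x (Suc i) k"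
    unfolding jordan_orbit_row_def by (simp add: sum.distrib distrib_right)
  show "jordan_orbit_row r x r k = 0"
    unfolding jordan_orbit_row_def by (intro sum.neutral) auto
qed

lemma jordan_orbit_row_bounded:
  assumes "k < n" and x: "\<And>j. j < r \<Longrightarrow> \<bar>x j\<bar> \<le> 1 / real n ^ j"
  shows "\<bar>jordan_orbit_row r x i k\<bar> \<le> real r"
proof -
  have "\<bar>(if i \<le> j then real (k choose (j - i)) else 0) * x j\<bar> \<le> 1" if "j < r" for j
  proof (cases "i \<le> j")
    case True
    have n: "real n > 0" using \<open>k < n\<close> by simp
    have "k choose (j - i) \<le> k ^ (j - i)"
      by (cases "j - i \<le> k") (auto simp: binomial_le_pow binomial_eq_0)
    also have "\<dots> \<le> n ^ (j - i)" using \<open>k < n\<close> by (intro power_mono) auto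
    finally have "k choose (j - i) \<le> n ^ (j - i)" .
    then have "real (k choose (j - i)) * \<bar>x j\<bar> \<le> real n ^ (j - i) * (1 / real n ^ j)"
      using x[OF \<open>j < r\<close>] by (intro mult_mono) (auto simp flip: of_nat_power)
    also have "\<dots> = 1 / real n ^ i"
      using \<open>i \<le> j\<close> n by (simp add: power_diff)
    also have "\<dots> \<le> 1" using n by simp
    finally show ?thesis using \<open>i \<le> j\<close> by (simp add: abs_mult)
  qed simp
  then have "(\<Sum>j<r. \<bar>(if i \<le> j then real (k choose (j - i)) else 0) * x j\<bar>) \<le> (\<Sum>j<r. 1)"
    by (intro sum_mono) auto
  then show ?thesis
    unfolding jordan_orbit_row_def by (simp add: order_trans[OF sum_abs])
qed

lemma div_block_length_bounds:
  fixes r n :: nat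
  assumes "1 \<le> r" "r \<le> n"
  shows "n div r \<ge> 1" "(r - 1) * (n div r) < n" "real n \<le> 2 * real r * real (n div r)"
proof -
  define L where "L = n div r"
  show "L \<ge> 1" using assms div_le_mono[of r n r] unfolding L_def by simp
  have "n = r * L + n mod r" "n mod r < r"
    unfolding L_def using assms by simp_all
  then have "r * L \<le> n" "n < r * L + r" by linarith+
  moreover have "L \<le> r * L" "r \<le> r * L" using assms \<open>L \<ge> 1\<close> by simp_all
  moreover have "(r - 1) * L = r * L - L" by (simp add: diff_mult_distrib)
  ultimately show "(r - 1) * L < n" using \<open>L \<ge> 1\<close> by linarith
  have "n \<le> 2 * r * L" using \<open>n < r * L + r\<close> \<open>r \<le> r * L\<close> by linarith
  then show "real n \<le> 2 * real r * real L"
    by (metis of_nat_le_iff of_nat_mult of_nat_numeral)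
qed

lemma jordan_orbit_coeff_bound:
  assumes "n \<ge> 1" and rows: "\<And>i k. i < r \<Longrightarrow> k < n \<Longrightarrow> \<bar>jordan_orbit_row r x i k\<bar> \<le> 1"
    and "j < r"
  shows "\<bar>x j\<bar> \<le> (4 * real r * (4 * real r + 1)) ^ r / real n ^ j"
proof -
  interpret forward_difference_tower r "jordan_orbit_row r x"
    by (rule forward_difference_tower_jordan_orbit_row)
  have n: "real n ^ j > 0" using \<open>n \<ge> 1\<close> by simp
  have "\<bar>x j\<bar> * real n ^ j \<le> (4 * real r * (4 * real r + 1)) ^ r"
  proof (cases "n < r")
    case True
    have "\<bar>x j\<bar> \<le> 1" using rows[OF \<open>j < r\<close>, of 0] \<open>n \<ge> 1\<close> jordan_orbit_row_start[OF \<open>j < r\<close>] by simp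
    moreover have "real n ^ j \<le> real r ^ r"
      using True \<open>j < r\<close> power_increasing[of j r "real r"] power_mono[of "real n" "real r" j] by simp
    moreover have "real r ^ r \<le> (4 * real r * (4 * real r + 1)) ^ r"
      by (intro power_mono) (auto simp: algebra_simps)
    ultimately show ?thesis using n by (smt (verit) mult_left_le_one_le)
  next
    case False
    define L where "L = n div r"
    have "L \<ge> 1" "(r - 1) * L < n" and nL: "real n \<le> 2 * real r * real L"
      using div_block_length_bounds[of r n] False \<open>j < r\<close> unfolding L_def by auto
    have L: "real L ^ j > 0" using \<open>L \<ge> 1\<close> by simp
    have row0: "\<And>k. k < n \<Longrightarrow> \<bar>jordan_orbit_row r x 0 k\<bar> \<le> 1"
      using rows \<open>j < r\<close> by simp
    have "\<bar>jordan_orbit_row r x j 0\<bar> \<le> 2 ^ r * (2 * (2 * real r) + 1) ^ (r - j) / real L ^ j"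
      by (rule row_bound[OF row0 \<open>L \<ge> 1\<close> \<open>(r - 1) * L < n\<close> nL]) (use \<open>j < r\<close> \<open>n \<ge> 1\<close> in auto)
    then have "\<bar>x j\<bar> \<le> 2 ^ r * (4 * real r + 1) ^ (r - j) / real L ^ j"
      using jordan_orbit_row_start[OF \<open>j < r\<close>] by simp
    moreover have "real n ^ j \<le> (2 * real r * real L) ^ j"
      using nL by (intro power_mono) auto
    then have "real n ^ j \<le> (2 * real r) ^ j * real L ^ j"
      by (simp add: power_mult_distrib)
    ultimately have "\<bar>x j\<bar> * real n ^ j
        \<le> 2 ^ r * (4 * real r + 1) ^ (r - j) / real L ^ j * ((2 * real r) ^ j * real L ^ j)"
      by (intro mult_mono) auto
    also have "\<dots> = 2 ^ r * (4 * real r + 1) ^ (r - j) * (2 * real r) ^ j"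
      using L by (simp add: field_simps)
    also have "\<dots> \<le> 2 ^ r * (4 * real r + 1) ^ r * (2 * real r) ^ r"
      using \<open>j < r\<close> by (intro mult_mono power_increasing) auto
    also have "\<dots> = (2 * (4 * real r + 1) * (2 * real r)) ^ r"
      by (simp only: power_mult_distrib)
    also have "\<dots> = (4 * real r * (4 * real r + 1)) ^ r"
      by (simp add: algebra_simps)
    finally show ?thesis .
  qed
  then show ?thesis using n by (simp add: field_simps)
qed

theorem lemmaB2:
  fixes r :: nat
  assumes "r \<ge> 1"
  shows "(\<exists>C::real. \<forall>(n::nat) (x::nat \<Rightarrow> real). n \<ge> 2 \<longrightarrow>
            (\<forall>j<r. \<bar>x j\<bar> \<le> 1 / real n ^ j) \<longrightarrow>
            (\<forall>i<r. \<forall>k<n. \<bar>\<Sum>j<r. ((jordan_block r (1::real)) ^\<^sub>m k) $$ (i, j) * x j\<bar> \<le> C))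
       \<and> (\<exists>C'::real. C' > 0 \<and> (\<forall>(n::nat) (x::nat \<Rightarrow> real). n \<ge> 2 \<longrightarrow>
            (\<forall>i<r. \<forall>k<n. \<bar>\<Sum>j<r. ((jordan_block r (1::real)) ^\<^sub>m k) $$ (i, j) * x j\<bar> \<le> 1) \<longrightarrow>
            (\<forall>j<r. \<bar>x j\<bar> \<le> C' / real n ^ j)))"
proof (intro conjI exI allI impI)
  show "\<bar>\<Sum>j<r. (jordan_block r 1 ^\<^sub>m k) $$ (i, j) * x j\<bar> \<le> real r"
    if "\<forall>j<r. \<bar>x j\<bar> \<le> 1 / real n ^ j" "i < r" "k < n" for n x i k
    using that by (simp add: jordan_block_pow_mult_row jordan_orbit_row_bounded)
  show "(0::real) < (4 * real r * (4 * real r + 1)) ^ r"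
    using assms by simp
  show "\<bar>x j\<bar> \<le> (4 * real r * (4 * real r + 1)) ^ r / real n ^ j"
    if "2 \<le> n" "\<forall>i<r. \<forall>k<n. \<bar>\<Sum>j<r. (jordan_block r 1 ^\<^sub>m k) $$ (i, j) * x j\<bar> \<le> 1" "j < r"
    for n x j
    using that by (intro jordan_orbit_coeff_bound) (auto simp: jordan_block_pow_mult_row)
qed

end
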